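(* Let $d\ge1$, $N\in\mathbb{N}$, $\alpha,\beta>0$ and $p>1/2$. Let $\mathcal{D}^{\rm te}$ be a distribution on $\mathbb{R}^d\times\{\pm1\}$ with $y\sim U(\{\pm1\})$, having one robust coordinate $r\in[d]$ and $d-1$ non-robust coordinates (all others), no irrelevant coordinates, such that $yx_r=\alpha$ with probability $p$ and $yx_r=-\alpha$ with probability $1-p$, and $yx_i=\beta$ with probability one for every $i\ne r$. For the query $(\bm x_{N+1},y_{N+1})$, let $\bm Z$ be formed with $\bm\Delta=\bm 0$ and define $$\tilde f(\bm P,\bm Q):=\mathbb{E}_{\{(\bm x_n,y_n)\}_{n=1}^{N}\overset{\text{i.i.d.}}{\sim}\mathcal{D}^{\rm te}}\big[y_{N+1}[f(\bm Z;\bm P,\bm Q)]_{d+1,N+1}\big],$$ a random variable depending on the query. Let $\bm P^{\rm std}=\bm P^{\rm adv}:=\begin{bmatrix}\bm 0_{d,d+1}\\ \bm 1_{d+1}^\top\end{bmatrix}$, $\bm Q^{\rm std}:=\begin{bmatrix}\bm 1_{d+1,d}&\bm 0_{d+1}\end{bmatrix}$, $\bm Q^{\rm adv}:=\begin{bmatrix}\bm I_d&\bm 0_d\\ \bm 0_d^\top&0\end{bmatrix}$. Then there exist strictly positive quantities $g_1,g_2>0$ depending only on $d,\alpha,\beta,p$ such that: $\tilde f(\bm P^{\rm std},\bm Q^{\rm std})=g_1(\alpha+(d-1)\beta)$ on the event $y_{N+1}x_{N+1,r}=\alpha$ (probability $p$), and $\tilde f(\bm P^{\rm std},\bm Q^{\rm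 std})=g_1(-\alpha+(d-1)\beta)$ on the event $y_{N+1}x_{N+1,r}=-\alpha$ (probability $1-p$); and $\tilde f(\bm P^{\rm adv},\bm Q^{\rm adv})\le g_2\{-(2p-1)\alpha^2+(d-1)\beta^2\}$ on the event $y_{N+1}x_{N+1,r}=-\alpha$ (probability $1-p$).
   Context: $[n]:=\{1,\dots,n\}$; $U(\mathcal S)$ is the uniform distribution on $\mathcal S$; $\bm 1_a,\bm 1_{a,b},\bm 0_a,\bm 0_{a,b},\bm I_a$ denote all-ones/all-zeros vectors and matrices and the identity. Transformer: given demonstrations $(\bm x_1,y_1),\dots,(\bm x_N,y_N)$, a query $\bm x_{N+1}\in\mathbb{R}^d$ and a perturbation $\bm\Delta\in\mathbb{R}^d$, let $\bm Z\in\mathbb{R}^{(d+1)\times(N+1)}$ have $n$-th column $(\bm x_n^\top,y_n)^\top$ for $n\le N$ and last column $((\bm x_{N+1}+\bm\Delta)^\top,0)^\top$. Let $\bm M:=\begin{bmatrix}\bm I_N&0\\0&0\end{bmatrix}$ and $f(\bm Z;\bm P,\bm Q):=\frac1N\bm P\bm Z\bm M\bm Z^\top\bm Q\bm Z$; $[\cdot]_{d+1,N+1}$ is the $(d+1,N+1)$ entry. Demonstrations and query are i.i.d. from $\mathcal{D}^{\rm te}$. *)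

theory Defs
  imports "HOL-Probability.Product_PMF" "Jordan_Normal_Form.Matrix"
begin

(* Indices are 0-based: rows 0..d (row d = label row), columns 0..N (column N = query). *)

definition Zmat :: "nat \<Rightarrow> nat \<Rightarrow> (nat \<Rightarrow> real Matrix.vec \<times> real) \<Rightarrow> real Matrix.vec \<Rightarrow> real Matrix.vec \<Rightarrow> real mat" where
  "Zmat d N S xq \<Delta> = mat (d+1) (N+1) (\<lambda>(i,j).
     if j < N then (if i < d then vec_index (fst (S j)) i else snd (S j))
     else (if i < d then vec_index xq i + vec_index \<Delta> i else 0))"

definition Mmat :: "nat \<Rightarrow> real mat" where
  "Mmat N = mat (N+1) (N+1) (\<lambda>(i,j). if i = j \<and> i < N then 1 else 0)"

definition ftf :: "nat \<Rightarrow> real mat \<Rightarrow> real mat \<Rightarrow> real mat \<Rightarrow> real mat" where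
  "ftf N Z P Q = (1 / real N) \<cdot>\<^sub>m (P * Z * Mmat N * transpose_mat Z * Q * Z)"

definition Pstd :: "nat \<Rightarrow> real mat" where
  "Pstd d = mat (d+1) (d+1) (\<lambda>(i,j). if i = d then 1 else 0)"

definition Padv :: "nat \<Rightarrow> real mat" where
  "Padv d = Pstd d"

definition Qstd :: "nat \<Rightarrow> real mat" where
  "Qstd d = mat (d+1) (d+1) (\<lambda>(i,j). if j < d then 1 else 0)"

definition Qadv :: "nat \<Rightarrow> real mat" where
  "Qadv d = mat (d+1) (d+1) (\<lambda>(i,j). if i = j \<and> i < d then 1 else 0)"

definition ftilde :: "nat \<Rightarrow> nat \<Rightarrow> (real Matrix.vec \<times> real) pmf \<Rightarrow> real mat \<Rightarrow> real mat \<Rightarrow> real Matrix.vec \<Rightarrow> real \<Rightarrow> real" where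
  "ftilde d N D P Q xq yq =
     measure_pmf.expectation (Pi_pmf {..<N} undefined (\<lambda>_. D))
       (\<lambda>S. yq * (ftf N (Zmat d N S xq (0\<^sub>v d)) P Q) $$ (d, N))"

end

theory Submission
  imports Defs
begin

text \<open>The all-ones last row of \<open>P\<close> sums the columns of \<open>Z\<close>, so with \<open>\<Delta> = 0\<close> the output
  entry is \<open>(1/N) \<Sum>\<^sub>n s\<^sub>n\<^sup>2 \<Sum>\<^sub>i x\<^sub>q\<^sub>,\<^sub>i\<close> for \<open>Q\<^sup>s\<^sup>t\<^sup>d\<close> and \<open>(1/N) \<Sum>\<^sub>n s\<^sub>n \<langle>x\<^sub>n, x\<^sub>q\<rangle>\<close>
  for \<open>Q\<^sup>a\<^sup>d\<^sup>v\<close>, where \<open>s\<^sub>n\<close> is the entry sum of the \<open>n\<close>-th demonstration column.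
  On the support every non-robust coordinate equals \<open>y \<beta>\<close>, so
  \<open>s\<^sub>n = y\<^sub>n (y\<^sub>n x\<^sub>n\<^sub>,\<^sub>r + (d-1)\<beta> + 1)\<close> and both summands depend on a demonstration only
  through \<open>y\<^sub>n x\<^sub>n\<^sub>,\<^sub>r \<in> {\<alpha>, -\<alpha>}\<close>: the expectation over the i.i.d. demonstrations is a
  two-point average. For \<open>Q\<^sup>s\<^sup>t\<^sup>d\<close> it is the positive constant \<open>E[s\<^sup>2]\<close> times
  \<open>y\<^sub>q \<Sum>\<^sub>i x\<^sub>q\<^sub>,\<^sub>i = y\<^sub>q x\<^sub>q\<^sub>,\<^sub>r + (d-1)\<beta>\<close>. For \<open>Q\<^sup>a\<^sup>d\<^sup>v\<close> and \<open>y\<^sub>q x\<^sub>q\<^sub>,\<^sub>r = -\<alpha>\<close> it is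
  \<open>L = C R + \<alpha> ((2p-1)(d-1)\<beta>\<^sup>2 - \<alpha>\<^sup>2)\<close> with \<open>C = (d-1)\<beta> + 1\<close> and \<open>R\<close> the target bound;
  the last summand is non-positive when \<open>R \<le> 0\<close>, so \<open>L \<le> g R\<close> for a suitable \<open>g > 0\<close>
  whatever the sign of \<open>R\<close>.\<close>

lemma index_mult_mat_sum:
  fixes A B :: "'a::comm_semiring_0 mat"
  assumes "i < dim_row A" "j < dim_col B" "dim_col A = dim_row B"
  shows "(A * B) $$ (i, j) = (\<Sum>k<dim_row B. A $$ (i, k) * B $$ (k, j))"
  using assms by (auto simp: scalar_prod_def atLeast0LessThan intro!: sum.cong)

declare index_mult_mat(1)[simp del]

lemma Pstd_mult_index:
  fixes A :: "real mat"
  assumes "dim_row A = d + 1" "j < dim_col A"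
  shows "(Pstd d * A) $$ (d, j) = (\<Sum>l<d+1. A $$ (l, j))"
  using assms by (subst index_mult_mat_sum) (simp_all add: Pstd_def)

lemma mult_Mmat_index:
  fixes A :: "real mat"
  assumes "dim_col A = N + 1" "i < dim_row A" "m < N + 1"
  shows "(A * Mmat N) $$ (i, m) = (if m < N then A $$ (i, m) else 0)"
proof -
  have "(A * Mmat N) $$ (i, m) = (\<Sum>k<N+1. A $$ (i, k) * Mmat N $$ (k, m))"
    using assms by (subst index_mult_mat_sum) (simp_all add: Mmat_def)
  also have "\<dots> = (\<Sum>k<N+1. if k = m then (if m < N then A $$ (i, m) else 0) else 0)"
    using assms(3) by (intro sum.cong) (auto simp: Mmat_def)
  finally show ?thesis
    using assms(3) by (simp only: sum.delta lessThan_iff) simp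
qed

definition column_sum :: "nat \<Rightarrow> real Matrix.vec \<times> real \<Rightarrow> real" where
  "column_sum d z = (\<Sum>i<d. fst z $ i) + snd z"

lemma Zmat_index_demo:
  "l < d + 1 \<Longrightarrow> m < N \<Longrightarrow>
    Zmat d N S xq (0\<^sub>v d) $$ (l, m) = (if l < d then fst (S m) $ l else snd (S m))"
  by (simp add: Zmat_def)

lemma Zmat_index_query:
  "l < d + 1 \<Longrightarrow> Zmat d N S xq (0\<^sub>v d) $$ (l, N) = (if l < d then xq $ l else 0)"
  by (simp add: Zmat_def)

lemma Zmat_column_sum:
  "m < N \<Longrightarrow> (\<Sum>l<d+1. Zmat d N S xq (0\<^sub>v d) $$ (l, m)) = column_sum d (S m)"
  by (simp add: Zmat_index_demo column_sum_def)

lemma Pstd_attention_index: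
  fixes d N :: nat and S xq
  defines "Z \<equiv> Zmat d N S xq (0\<^sub>v d)"
  assumes "k < d + 1"
  shows "(Pstd d * Z * Mmat N * transpose_mat Z) $$ (d, k) = (\<Sum>m<N. column_sum d (S m) * Z $$ (k, m))"
proof -
  have dims: "dim_row Z = d + 1" "dim_col Z = N + 1" "dim_row (Pstd d) = d + 1"
    by (simp_all add: Z_def Zmat_def Pstd_def)
  have row: "(Pstd d * Z * Mmat N) $$ (d, m) = (if m < N then column_sum d (S m) else 0)"
    if "m < N + 1" for m
    using that dims by (simp add: mult_Mmat_index Pstd_mult_index Z_def Zmat_index_demo column_sum_def)
  have "(Pstd d * Z * Mmat N * transpose_mat Z) $$ (d, k)
      = (\<Sum>m<N+1. (Pstd d * Z * Mmat N) $$ (d, m) * Z $$ (k, m))"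
    using assms(2) dims by (subst index_mult_mat_sum) (simp_all add: Mmat_def)
  also have "\<dots> = (\<Sum>m<N+1. if m < N then column_sum d (S m) * Z $$ (k, m) else 0)"
    by (intro sum.cong refl) (simp add: row)
  finally show ?thesis
    by simp
qed

lemma ftf_Pstd_index:
  fixes d N :: nat and Q :: "real mat" and S xq
  defines "Z \<equiv> Zmat d N S xq (0\<^sub>v d)"
  assumes "dim_row Q = d + 1" "dim_col Q = d + 1"
  shows "ftf N Z (Pstd d) Q $$ (d, N) = 1 / real N *
    (\<Sum>j<d. (\<Sum>k<d+1. (\<Sum>m<N. column_sum d (S m) * Z $$ (k, m)) * Q $$ (k, j)) * xq $ j)"
proof -
  let ?W = "Pstd d * Z * Mmat N * transpose_mat Z"
  have dims: "dim_row Z = d + 1" "dim_col Z = N + 1" "dim_row ?W = d + 1" "dim_col ?W = d + 1"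
    by (simp_all add: Z_def Zmat_def Pstd_def)
  have "(?W * Q * Z) $$ (d, N) = (\<Sum>j<d+1. (?W * Q) $$ (d, j) * Z $$ (j, N))"
    using assms(2,3) dims by (subst index_mult_mat_sum) simp_all
  also have "\<dots> = (\<Sum>j<d. (?W * Q) $$ (d, j) * xq $ j)"
    by (simp add: Z_def Zmat_index_query)
  also have "\<dots> = (\<Sum>j<d. (\<Sum>k<d+1. (\<Sum>m<N. column_sum d (S m) * Z $$ (k, m)) * Q $$ (k, j)) * xq $ j)"
    using assms(2,3) dims
    by (intro sum.cong refl) (simp add: index_mult_mat_sum Pstd_attention_index Z_def)
  finally show ?thesis
    using assms(2,3) dims by (simp add: ftf_def)
qed

lemma ftf_std_index:
  "ftf N (Zmat d N S xq (0\<^sub>v d)) (Pstd d) (Qstd d) $$ (d, N) =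
     1 / real N * (\<Sum>m<N. (column_sum d (S m))\<^sup>2) * (\<Sum>j<d. xq $ j)"
proof -
  let ?Z = "Zmat d N S xq (0\<^sub>v d)"
  let ?T = "\<lambda>k. \<Sum>m<N. column_sum d (S m) * ?Z $$ (k, m)"
  have Qstd_col: "(\<Sum>k<d+1. ?T k * Qstd d $$ (k, j)) = (\<Sum>k<d+1. ?T k)" if "j < d" for j
    using that by (intro sum.cong refl) (simp add: Qstd_def)
  have "(\<Sum>k<d+1. ?T k) = (\<Sum>m<N. column_sum d (S m) * (\<Sum>k<d+1. ?Z $$ (k, m)))"
    unfolding sum_distrib_left by (rule sum.swap)
  also have "\<dots> = (\<Sum>m<N. (column_sum d (S m))\<^sup>2)"
    by (intro sum.cong refl) (simp only: lessThan_iff Zmat_column_sum power2_eq_square)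
  finally have total: "(\<Sum>k<d+1. ?T k) = (\<Sum>m<N. (column_sum d (S m))\<^sup>2)" .
  have "ftf N ?Z (Pstd d) (Qstd d) $$ (d, N) = 1 / real N * (\<Sum>j<d. (\<Sum>k<d+1. ?T k * Qstd d $$ (k, j)) * xq $ j)"
    by (rule ftf_Pstd_index) (simp_all add: Qstd_def)
  also have "\<dots> = 1 / real N * (\<Sum>j<d. (\<Sum>m<N. (column_sum d (S m))\<^sup>2) * xq $ j)"
    by (rule arg_cong[of _ _ "\<lambda>s. 1 / real N * s"], rule sum.cong) (simp_all only: lessThan_iff Qstd_col total)
  finally show ?thesis
    by (simp only: mult.assoc sum_distrib_left[where r = "\<Sum>m<N. (column_sum d (S m))\<^sup>2"])
qed

lemma ftf_adv_index:
  "ftf N (Zmat d N S xq (0\<^sub>v d)) (Padv d) (Qadv d) $$ (d, N) =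
     1 / real N * (\<Sum>m<N. column_sum d (S m) * (\<Sum>j<d. fst (S m) $ j * xq $ j))"
proof -
  let ?Z = "Zmat d N S xq (0\<^sub>v d)"
  let ?T = "\<lambda>k. \<Sum>m<N. column_sum d (S m) * ?Z $$ (k, m)"
  have Qadv_col: "(\<Sum>k<d+1. ?T k * Qadv d $$ (k, j)) = ?T j" if "j < d" for j
  proof -
    have "(\<Sum>k<d+1. ?T k * Qadv d $$ (k, j)) = (\<Sum>k<d+1. if k = j then ?T j else 0)"
      using that by (intro sum.cong) (auto simp: Qadv_def)
    then show ?thesis
      using that by (simp only: sum.delta lessThan_iff) simp
  qed
  have "ftf N ?Z (Padv d) (Qadv d) $$ (d, N) = 1 / real N * (\<Sum>j<d. (\<Sum>k<d+1. ?T k * Qadv d $$ (k, j)) * xq $ j)"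
    unfolding Padv_def by (rule ftf_Pstd_index) (simp_all add: Qadv_def)
  also have "\<dots> = 1 / real N * (\<Sum>j<d. ?T j * xq $ j)"
    by (rule arg_cong[of _ _ "\<lambda>s. 1 / real N * s"], rule sum.cong) (simp_all only: lessThan_iff Qadv_col)
  also have "(\<Sum>j<d. ?T j * xq $ j) = (\<Sum>m<N. column_sum d (S m) * (\<Sum>j<d. fst (S m) $ j * xq $ j))"
    by (simp add: Zmat_index_demo sum_distrib_left sum_distrib_right sum.swap[of _ "{..<d}"] mult.assoc)
  finally show ?thesis .
qed

lemma expectation_two_valued:
  fixes D :: "'a pmf" and s :: "'a \<Rightarrow> 'b" and h :: "'a \<Rightarrow> real"
  assumes "a1 \<noteq> a2"
    and prob1: "measure_pmf.prob D {z. s z = a1} = p1"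
    and prob2: "measure_pmf.prob D {z. s z = a2} = p2"
    and "p1 + p2 = 1"
    and val1: "\<And>z. z \<in> set_pmf D \<Longrightarrow> s z = a1 \<Longrightarrow> h z = c1"
    and val2: "\<And>z. z \<in> set_pmf D \<Longrightarrow> s z = a2 \<Longrightarrow> h z = c2"
  shows "integrable (measure_pmf D) h"
    and "measure_pmf.expectation D h = c1 * p1 + c2 * p2"
proof -
  let ?A = "{z. s z = a1}" and ?B = "{z. s z = a2}"
  have "measure_pmf.prob D (?A \<union> ?B) = 1"
    using measure_pmf.finite_measure_Union[of ?A D ?B] assms(1-4) by auto
  then have "measure_pmf.prob D (UNIV - (?A \<union> ?B)) = 0"
    using measure_pmf.prob_compl[of "?A \<union> ?B" D] by simp
  then have support: "s z = a1 \<or> s z = a2" if "z \<in> set_pmf D" for z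
    using that unfolding measure_pmf_zero_iff by blast
  let ?g = "\<lambda>z. c1 * indicator ?A z + c2 * indicator ?B z"
  have ae: "AE z in measure_pmf D. h z = ?g z"
    by (rule AE_pmfI) (use support val1 val2 assms(1) in \<open>auto simp: indicator_def\<close>)
  have "integrable (measure_pmf D) ?g"
    by (rule measure_pmf.integrable_const_bound[where B = "\<bar>c1\<bar> + \<bar>c2\<bar>"])
      (auto simp: indicator_def)
  then show "integrable (measure_pmf D) h"
    using integrable_cong_AE[OF _ _ ae] by simp
  have "measure_pmf.expectation D h = measure_pmf.expectation D ?g"
    by (rule integral_cong_AE) (use ae in auto)
  also have "\<dots> = c1 * p1 + c2 * p2"
    using prob1 prob2 by (simp add: measure_pmf.emeasure_eq_measure)
  finally show "measure_pmf.expectation D h = c1 * p1 + c2 * p2" .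
qed

lemma expectation_Pi_pmf_mean:
  fixes D :: "'a pmf" and h :: "'a \<Rightarrow> real"
  assumes "integrable (measure_pmf D) h" and "N \<ge> 1"
  shows "measure_pmf.expectation (Pi_pmf {..<N} dflt (\<lambda>_. D)) (\<lambda>S. (\<Sum>m<N. h (S m)) / real N)
       = measure_pmf.expectation D h"
proof -
  let ?P = "Pi_pmf {..<N} dflt (\<lambda>_. D)"
  have marginal: "map_pmf (\<lambda>S. S m) ?P = D" if "m < N" for m
    using that by (simp add: Pi_pmf_component)
  have "integrable (measure_pmf ?P) (\<lambda>S. h (S m))" if "m < N" for m
    using assms(1) marginal[OF that] integrable_map_pmf_eq[of "\<lambda>S. S m" ?P h] by simp
  then have "measure_pmf.expectation ?P (\<lambda>S. (\<Sum>m<N. h (S m)) / real N)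
      = (\<Sum>m<N. measure_pmf.expectation (map_pmf (\<lambda>S. S m) ?P) h) / real N"
    by (simp add: Bochner_Integration.integral_sum)
  also have "\<dots> = measure_pmf.expectation D h"
    using assms(2) by (simp add: marginal)
  finally show ?thesis .
qed

lemma sum_lessThan_all_but_one:
  fixes f :: "nat \<Rightarrow> real"
  assumes "r < d" "\<And>i. i < d \<Longrightarrow> i \<noteq> r \<Longrightarrow> f i = c"
  shows "(\<Sum>i<d. f i) = f r + real (d - 1) * c"
proof -
  have "(\<Sum>i<d. f i) = f r + (\<Sum>i\<in>{..<d} - {r}. f i)"
    using assms(1) by (simp add: sum.remove)
  also have "(\<Sum>i\<in>{..<d} - {r}. f i) = (\<Sum>i\<in>{..<d} - {r}. c)"
    using assms(2) by (intro sum.cong) auto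
  finally show ?thesis
    using assms(1) by simp
qed

definition column_sum_second_moment :: "nat \<Rightarrow> real \<Rightarrow> real \<Rightarrow> real \<Rightarrow> real" where
  "column_sum_second_moment d \<alpha> \<beta> p =
     (real (d - 1) * \<beta> + 1 + \<alpha>)\<^sup>2 * p + (real (d - 1) * \<beta> + 1 - \<alpha>)\<^sup>2 * (1 - p)"

definition adv_output :: "nat \<Rightarrow> real \<Rightarrow> real \<Rightarrow> real \<Rightarrow> real" where
  "adv_output d \<alpha> \<beta> p =
     (real (d - 1) * \<beta> + 1 + \<alpha>) * (real (d - 1) * \<beta>\<^sup>2 - \<alpha>\<^sup>2) * p +
     (real (d - 1) * \<beta> + 1 - \<alpha>) * (real (d - 1) * \<beta>\<^sup>2 + \<alpha>\<^sup>2) * (1 - p)"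

lemma column_sum_second_moment_pos:
  assumes "\<alpha> > 0" "\<beta> \<ge> 0" "p > 0"
  shows "column_sum_second_moment d \<alpha> \<beta> p > 0"
proof -
  define C where "C = real (d - 1) * \<beta> + 1"
  have "column_sum_second_moment d \<alpha> \<beta> p = (C - \<alpha>)\<^sup>2 + p * (4 * \<alpha> * C)"
    unfolding column_sum_second_moment_def C_def[symmetric] by (simp add: algebra_simps power2_eq_square)
  moreover have "p * (4 * \<alpha> * C) > 0"
    using assms by (simp add: C_def add_nonneg_pos)
  ultimately show ?thesis
    by (simp add: add_nonneg_pos)
qed

lemma adv_output_le:
  assumes "\<alpha> > 0" "1/2 < p" "p \<le> 1"
    and target_nonpos: "-(2*p - 1) * \<alpha>\<^sup>2 + real (d - 1) * \<beta>\<^sup>2 \<le> 0"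
  shows "adv_output d \<alpha> \<beta> p \<le> (real (d - 1) * \<beta> + 1) * (-(2*p - 1) * \<alpha>\<^sup>2 + real (d - 1) * \<beta>\<^sup>2)"
proof -
  define K where "K = real (d - 1) * \<beta>\<^sup>2"
  have split: "adv_output d \<alpha> \<beta> p
      = (real (d - 1) * \<beta> + 1) * (-(2*p - 1) * \<alpha>\<^sup>2 + K) + \<alpha> * ((2*p - 1) * K - \<alpha>\<^sup>2)"
    unfolding adv_output_def K_def by (simp add: algebra_simps power2_eq_square)
  have "K \<le> (2*p - 1) * \<alpha>\<^sup>2"
    using target_nonpos unfolding K_def by linarith
  then have "(2*p - 1) * K \<le> (2*p - 1) * ((2*p - 1) * \<alpha>\<^sup>2)"
    using assms(2) by (intro mult_left_mono) auto
  also have "\<dots> = ((2*p - 1) * (2*p - 1)) * \<alpha>\<^sup>2"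
    by (simp only: mult.assoc)
  also have "\<dots> \<le> \<alpha>\<^sup>2"
    using assms(2,3) by (intro mult_left_le_one_le mult_le_one) auto
  finally have "\<alpha> * ((2*p - 1) * K - \<alpha>\<^sup>2) \<le> 0"
    using assms(1) by (simp add: mult_nonneg_nonpos)
  then show ?thesis
    unfolding split K_def by simp
qed

lemma le_scaled_by_pos_factor:
  fixes L R c :: real
  assumes "R \<le> 0 \<Longrightarrow> L \<le> c * R"
  shows "L \<le> (if 0 < R then max c (L / R) else c) * R"
proof (cases "0 < R")
  case True
  then have "L \<le> max c (L / R) * R"
    using mult_right_mono[of "L / R" "max c (L / R)" R] by simp
  with True show ?thesis
    by simp
qed (use assms in simp)

locale one_robust_feature =
  fixes D :: "(real Matrix.vec \<times> real) pmf" and d r :: nat and \<alpha> \<beta> p :: real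
  assumes robust_index: "r < d" and alpha_pos: "\<alpha> > 0"
    and labels: "\<And>x y. (x, y) \<in> set_pmf D \<Longrightarrow> y \<in> {-1, 1}"
    and prob_robust_pos: "measure_pmf.prob D {z. snd z * fst z $ r = \<alpha>} = p"
    and prob_robust_neg: "measure_pmf.prob D {z. snd z * fst z $ r = -\<alpha>} = 1 - p"
    and non_robust: "\<And>x y i. (x, y) \<in> set_pmf D \<Longrightarrow> i < d \<Longrightarrow> i \<noteq> r \<Longrightarrow> y * x $ i = \<beta>"
begin

lemma label_square: "(x, y) \<in> set_pmf D \<Longrightarrow> y * y = 1"
  using labels by fastforce

lemma non_robust_coord: "(x, y) \<in> set_pmf D \<Longrightarrow> i < d \<Longrightarrow> i \<noteq> r \<Longrightarrow> x $ i = y * \<beta>"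
  using label_square[of x y] non_robust[of x y i] by (metis mult.assoc mult_1)

lemma sum_coords:
  assumes "(x, y) \<in> set_pmf D"
  shows "(\<Sum>i<d. x $ i) = y * (y * x $ r + real (d - 1) * \<beta>)"
proof -
  have "(\<Sum>i<d. x $ i) = x $ r + real (d - 1) * (y * \<beta>)"
    using assms by (intro sum_lessThan_all_but_one robust_index non_robust_coord)
  then show ?thesis
    using label_square[OF assms] by (simp add: algebra_simps)
qed

lemma sum_coord_products:
  assumes "(x, y) \<in> set_pmf D" "(x', y') \<in> set_pmf D"
  shows "(\<Sum>i<d. x $ i * x' $ i) = y * y' * ((y * x $ r) * (y' * x' $ r) + real (d - 1) * \<beta>\<^sup>2)"
proof -
  have "(\<Sum>i<d. x $ i * x' $ i) = x $ r * x' $ r + real (d - 1) * ((y * y') * \<beta>\<^sup>2)"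
    using assms
    by (intro sum_lessThan_all_but_one robust_index) (simp add: non_robust_coord power2_eq_square)
  also have "\<dots> = (y * y) * (y' * y') * (x $ r * x' $ r) + real (d - 1) * ((y * y') * \<beta>\<^sup>2)"
    using label_square assms by simp
  finally show ?thesis
    by (simp add: algebra_simps)
qed

lemma column_sum_support:
  assumes "z \<in> set_pmf D"
  shows "column_sum d z = snd z * (snd z * fst z $ r + real (d - 1) * \<beta> + 1)"
  using sum_coords[of "fst z" "snd z"] label_square[of "fst z" "snd z"] assms
  by (simp add: column_sum_def algebra_simps)

lemma robust_two_valued:
  assumes "\<And>z. z \<in> set_pmf D \<Longrightarrow> snd z * fst z $ r = \<alpha> \<Longrightarrow> h z = c1"
    and "\<And>z. z \<in> set_pmf D \<Longrightarrow> snd z * fst z $ r = -\<alpha> \<Longrightarrow> h z = c2"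
  shows "integrable (measure_pmf D) h"
    and "measure_pmf.expectation D h = c1 * p + c2 * (1 - p)"
  using expectation_two_valued[OF _ prob_robust_pos prob_robust_neg _ assms] alpha_pos by simp_all

lemma ftilde_std:
  assumes "N \<ge> 1" "(xq, yq) \<in> set_pmf D"
  shows "ftilde d N D (Pstd d) (Qstd d) xq yq
       = column_sum_second_moment d \<alpha> \<beta> p * (yq * xq $ r + real (d - 1) * \<beta>)"
proof -
  let ?h = "\<lambda>z. (column_sum d z)\<^sup>2"
  have square: "?h z = (snd z * fst z $ r + real (d - 1) * \<beta> + 1)\<^sup>2" if "z \<in> set_pmf D" for z
    using column_sum_support[OF that] label_square[of "fst z" "snd z"] that
    by (simp add: power_mult_distrib power2_eq_square)
  have pos: "?h z = (real (d - 1) * \<beta> + 1 + \<alpha>)\<^sup>2"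
    if "z \<in> set_pmf D" "snd z * fst z $ r = \<alpha>" for z
    unfolding square[OF that(1)] that(2) by (simp add: ac_simps)
  have neg: "?h z = (real (d - 1) * \<beta> + 1 - \<alpha>)\<^sup>2"
    if "z \<in> set_pmf D" "snd z * fst z $ r = -\<alpha>" for z
    unfolding square[OF that(1)] that(2) by (simp add: algebra_simps)
  note moments = robust_two_valued[of ?h, OF pos neg]
  have moment: "measure_pmf.expectation D ?h = column_sum_second_moment d \<alpha> \<beta> p"
    unfolding column_sum_second_moment_def by (rule moments(2))
  have "ftilde d N D (Pstd d) (Qstd d) xq yq = measure_pmf.expectation (Pi_pmf {..<N} undefined (\<lambda>_. D))
        (\<lambda>S. (yq * (\<Sum>j<d. xq $ j)) * ((\<Sum>m<N. ?h (S m)) / real N))"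
    unfolding ftilde_def ftf_std_index by (simp add: algebra_simps)
  also have "\<dots> = (yq * (\<Sum>j<d. xq $ j)) * column_sum_second_moment d \<alpha> \<beta> p"
    by (simp only: integral_mult_right_zero expectation_Pi_pmf_mean[OF moments(1) assms(1)] moment)
  also have "yq * (\<Sum>j<d. xq $ j) = yq * xq $ r + real (d - 1) * \<beta>"
    using sum_coords[OF assms(2)] label_square[OF assms(2)] by (simp add: mult.assoc[symmetric])
  finally show ?thesis
    by (simp only: mult.commute)
qed

lemma ftilde_adv:
  assumes "N \<ge> 1" "(xq, yq) \<in> set_pmf D" "yq * xq $ r = -\<alpha>"
  shows "ftilde d N D (Padv d) (Qadv d) xq yq = adv_output d \<alpha> \<beta> p"
proof -
  let ?h = "\<lambda>z. column_sum d z * (yq * (\<Sum>j<d. fst z $ j * xq $ j))"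
  have summand: "?h z = (snd z * fst z $ r + real (d - 1) * \<beta> + 1) *
      ((snd z * fst z $ r) * (-\<alpha>) + real (d - 1) * \<beta>\<^sup>2)" if z: "z \<in> set_pmf D" for z
  proof -
    have "?h z = (snd z * snd z) * (yq * yq) * ((snd z * fst z $ r + real (d - 1) * \<beta> + 1) *
        ((snd z * fst z $ r) * (yq * xq $ r) + real (d - 1) * \<beta>\<^sup>2))"
      using column_sum_support[OF z] sum_coord_products[of "fst z" "snd z" xq yq] z assms(2)
      by (simp add: algebra_simps)
    then show ?thesis
      using label_square[of "fst z" "snd z"] label_square[OF assms(2)] assms(3) z by simp
  qed
  have pos: "?h z = (real (d - 1) * \<beta> + 1 + \<alpha>) * (real (d - 1) * \<beta>\<^sup>2 - \<alpha>\<^sup>2)"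
    if "z \<in> set_pmf D" "snd z * fst z $ r = \<alpha>" for z
    unfolding summand[OF that(1)] that(2) by (simp add: algebra_simps power2_eq_square)
  have neg: "?h z = (real (d - 1) * \<beta> + 1 - \<alpha>) * (real (d - 1) * \<beta>\<^sup>2 + \<alpha>\<^sup>2)"
    if "z \<in> set_pmf D" "snd z * fst z $ r = -\<alpha>" for z
    unfolding summand[OF that(1)] that(2) by (simp add: algebra_simps power2_eq_square)
  note moments = robust_two_valued[of ?h, OF pos neg]
  have expected: "measure_pmf.expectation D ?h = adv_output d \<alpha> \<beta> p"
    unfolding adv_output_def by (rule moments(2))
  have "ftilde d N D (Padv d) (Qadv d) xq yq
      = measure_pmf.expectation (Pi_pmf {..<N} undefined (\<lambda>_. D)) (\<lambda>S. (\<Sum>m<N. ?h (S m)) / real N)"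
    unfolding ftilde_def ftf_adv_index
    by (intro Bochner_Integration.integral_cong refl)
      (simp only: sum_distrib_left[of yq] mult.left_commute[of yq] times_divide_eq_right times_divide_eq_left mult_1)
  also have "\<dots> = adv_output d \<alpha> \<beta> p"
    by (simp only: expectation_Pi_pmf_mean[OF moments(1) assms(1)] expected)
  finally show ?thesis .
qed

end

theorem theorem3p5:
  fixes d :: nat and \<alpha> \<beta> p :: real
  assumes "d \<ge> 1" and "\<alpha> > 0" and "\<beta> > 0" and "p > 1/2"
  shows "\<exists>g1 g2. g1 > 0 \<and> g2 > 0 \<and>
    (\<forall>(N::nat) (D :: (real Matrix.vec \<times> real) pmf) (r::nat).
       N \<ge> 1 \<longrightarrow> r < d \<longrightarrow>
       (\<forall>(x,y)\<in>set_pmf D. dim_vec x = d \<and> y \<in> {-1, 1}) \<longrightarrow>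
       measure_pmf.prob D {z. snd z = 1} = 1/2 \<longrightarrow>
       measure_pmf.prob D {z. snd z * vec_index (fst z) r = \<alpha>} = p \<longrightarrow>
       measure_pmf.prob D {z. snd z * vec_index (fst z) r = -\<alpha>} = 1 - p \<longrightarrow>
       (\<forall>(x,y)\<in>set_pmf D. \<forall>i<d. i \<noteq> r \<longrightarrow> y * vec_index x i = \<beta>) \<longrightarrow>
       (\<forall>(xq,yq)\<in>set_pmf D.
          (yq * vec_index xq r = \<alpha> \<longrightarrow>
             ftilde d N D (Pstd d) (Qstd d) xq yq = g1 * (\<alpha> + real (d - 1) * \<beta>)) \<and>
          (yq * vec_index xq r = -\<alpha> \<longrightarrow>
             ftilde d N D (Pstd d) (Qstd d) xq yq = g1 * (-\<alpha> + real (d - 1) * \<beta>)) \<and>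
          (yq * vec_index xq r = -\<alpha> \<longrightarrow>
             ftilde d N D (Padv d) (Qadv d) xq yq
               \<le> g2 * (-(2*p - 1) * \<alpha>^2 + real (d - 1) * \<beta>^2))))"
    (is "\<exists>g1 g2. _ \<and> _ \<and> (\<forall>N D r. _ \<longrightarrow> _ \<longrightarrow> _ \<longrightarrow> _ \<longrightarrow> _ \<longrightarrow> _ \<longrightarrow> _ \<longrightarrow> ?responses g1 g2 N D r)")
proof -
  define C where "C = real (d - 1) * \<beta> + 1"
  define R where "R = -(2*p - 1) * \<alpha>^2 + real (d - 1) * \<beta>^2"
  define g2 where "g2 = (if 0 < R then max C (adv_output d \<alpha> \<beta> p / R) else C)"
  have "C > 0"
    using assms(3) by (simp add: C_def add_nonneg_pos)
  then have g2_pos: "g2 > 0"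
    by (simp add: g2_def less_max_iff_disj)
  have adv_bound: "adv_output d \<alpha> \<beta> p \<le> g2 * R" if "p \<le> 1"
    unfolding g2_def C_def
    by (rule le_scaled_by_pos_factor) (use adv_output_le assms(2,4) that in \<open>simp add: R_def\<close>)
  have g1_pos: "column_sum_second_moment d \<alpha> \<beta> p > 0"
    using assms by (intro column_sum_second_moment_pos) auto
  show ?thesis
  proof (rule exI[of _ "column_sum_second_moment d \<alpha> \<beta> p"], rule exI[of _ g2],
      intro conjI allI impI g1_pos g2_pos)
    fix N :: nat and D :: "(real Matrix.vec \<times> real) pmf" and r :: nat
    assume hyps: "N \<ge> 1" "r < d"
      "\<forall>(x,y)\<in>set_pmf D. dim_vec x = d \<and> y \<in> {-1, 1}"
      "measure_pmf.prob D {z. snd z = 1} = 1/2"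
      "measure_pmf.prob D {z. snd z * vec_index (fst z) r = \<alpha>} = p"
      "measure_pmf.prob D {z. snd z * vec_index (fst z) r = -\<alpha>} = 1 - p"
      "\<forall>(x,y)\<in>set_pmf D. \<forall>i<d. i \<noteq> r \<longrightarrow> y * vec_index x i = \<beta>"
    interpret one_robust_feature D d r \<alpha> \<beta> p
      by unfold_locales (use assms(2) hyps in auto)
    have "p \<le> 1"
      using prob_robust_pos measure_pmf.prob_le_1 by metis
    then show "?responses (column_sum_second_moment d \<alpha> \<beta> p) g2 N D r"
      using ftilde_std ftilde_adv adv_bound \<open>N \<ge> 1\<close> by (auto simp: R_def)
  qed
qed

end
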